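(* Let $\mathbb W=(W,I,\preccurlyeq,\circ,{}^\sim,{}^-,{}^\neg)$ be a DqRA-frame. Then $(x^\sim)^\neg=(x^\neg)^-$ for all $x\in W$.
   Context: For a set $W$ and $\circ:W\times W\to\mathcal P(W)$, $U\circ V=\bigcup\{a\circ b\mid a\in U,b\in V\}$, $x\circ V=\{x\}\circ V$, $U\circ y=U\circ\{y\}$; superscripts compose left to right, e.g. $x^{\sim\neg}=(x^\sim)^\neg$. A DInFL-frame is a tuple $(W,I,\preccurlyeq,\circ,{}^\sim,{}^-)$ with $I\subseteq W$, $\preccurlyeq$ a partial order, $\circ:W\times W\to\mathcal P(W)$, ${}^\sim,{}^-:W\to W$, such that for all $u,v,x,y,z$: (F1) $x\preccurlyeq y$ iff $y\in I\circ x$ iff $y\in x\circ I$; (F2) $x\preccurlyeq y$, $x\in I$ imply $y\in I$; (F3) $x\preccurlyeq y$, $x\in u\circ v$ imply $y\in u\circ v$; (F4) $(x\circ y)\circ z=x\circ(y\circ z)$; (F5) $z^\sim\in x\circ y$ iff $y^-\in z\circ x$; (F6) $x^{\sim-}\preccurlyeq x$ and $x^{-\sim}\preccurlyeq x$. A DqRA-frame is a tuple $(W,I,\preccurlyeq,\circ,{}^\sim,{}^-,{}^\neg)$ such that $(W,I,\preccurlyeq,\circ,{}^\sim,{}^-)$ is a DInFL-frame and ${}^\neg:W\to W$ satisfies for all $x,y,z$: (F7) $x^{\neg\neg}=x$; (F8) $x\preccurlyeq y$ implies $y^\neg\preccurlyeq x^\neg$; (F9) $z^-\in x\circ y$ iff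 $z^\neg\in y^{\sim\neg}\circ x^{\sim\neg}$. *)

theory Defs
  imports Main
begin

definition setcirc :: "('a \<Rightarrow> 'a \<Rightarrow> 'a set) \<Rightarrow> 'a set \<Rightarrow> 'a set \<Rightarrow> 'a set" where
  "setcirc c U V = \<Union> {c a b | a b. a \<in> U \<and> b \<in> V}"

definition DInFL_frame ::
  "'a set \<Rightarrow> 'a set \<Rightarrow> ('a \<Rightarrow> 'a \<Rightarrow> bool) \<Rightarrow> ('a \<Rightarrow> 'a \<Rightarrow> 'a set)
   \<Rightarrow> ('a \<Rightarrow> 'a) \<Rightarrow> ('a \<Rightarrow> 'a) \<Rightarrow> bool" where
  "DInFL_frame W I le c tld mn \<longleftrightarrow>
     I \<subseteq> W
   \<and> (\<forall>x\<in>W. \<forall>y\<in>W. c x y \<subseteq> W)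
   \<and> (\<forall>x\<in>W. tld x \<in> W) \<and> (\<forall>x\<in>W. mn x \<in> W)
   \<and> (\<forall>x\<in>W. le x x)
   \<and> (\<forall>x\<in>W. \<forall>y\<in>W. le x y \<and> le y x \<longrightarrow> x = y)
   \<and> (\<forall>x\<in>W. \<forall>y\<in>W. \<forall>z\<in>W. le x y \<and> le y z \<longrightarrow> le x z)
   \<and> (\<forall>x\<in>W. \<forall>y\<in>W. (le x y \<longleftrightarrow> y \<in> setcirc c I {x}) \<and> (le x y \<longleftrightarrow> y \<in> setcirc c {x} I))
   \<and> (\<forall>x\<in>W. \<forall>y\<in>W. le x y \<and> x \<in> I \<longrightarrow> y \<in> I)
   \<and> (\<forall>x\<in>W. \<forall>y\<in>W. \<forall>u\<in>W. \<forall>v\<in>W. le x y \<and> x \<in> c u v \<longrightarrow> y \<in> c u v)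
   \<and> (\<forall>x\<in>W. \<forall>y\<in>W. \<forall>z\<in>W. setcirc c (c x y) {z} = setcirc c {x} (c y z))
   \<and> (\<forall>x\<in>W. \<forall>y\<in>W. \<forall>z\<in>W. tld z \<in> c x y \<longleftrightarrow> mn y \<in> c z x)
   \<and> (\<forall>x\<in>W. le (mn (tld x)) x \<and> le (tld (mn x)) x)"

definition DqRA_frame ::
  "'a set \<Rightarrow> 'a set \<Rightarrow> ('a \<Rightarrow> 'a \<Rightarrow> bool) \<Rightarrow> ('a \<Rightarrow> 'a \<Rightarrow> 'a set)
   \<Rightarrow> ('a \<Rightarrow> 'a) \<Rightarrow> ('a \<Rightarrow> 'a) \<Rightarrow> ('a \<Rightarrow> 'a) \<Rightarrow> bool" where
  "DqRA_frame W I le c tld mn ng \<longleftrightarrow>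
     DInFL_frame W I le c tld mn
   \<and> (\<forall>x\<in>W. ng x \<in> W)
   \<and> (\<forall>x\<in>W. ng (ng x) = x)
   \<and> (\<forall>x\<in>W. \<forall>y\<in>W. le x y \<longrightarrow> le (ng y) (ng x))
   \<and> (\<forall>x\<in>W. \<forall>y\<in>W. \<forall>z\<in>W. mn z \<in> c x y \<longleftrightarrow> ng z \<in> c (ng (tld y)) (ng (tld x)))"

end

theory Submission
  imports Defs
begin

text \<open>
  In a DInFL-frame the maps \<open>\<sim>\<close> and \<open>-\<close> are mutually inverse: the condition
  \<open>z\<^sup>\<sim> \<in> x \<circ> y \<longleftrightarrow> y\<^sup>- \<in> z \<circ> x\<close> turns a unit witnessing \<open>a\<^sup>- \<preccurlyeq> a\<^sup>-\<close> into one
  witnessing \<open>a \<preccurlyeq> a\<^sup>-\<^sup>\<sim>\<close>, and \<open>a\<^sup>-\<^sup>\<sim> \<preccurlyeq> a\<close> is an axiom. Writing \<open>w = w\<^sup>-\<^sup>\<sim>\<close> and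
  combining that condition with the one relating \<open>-\<close> and \<open>\<not>\<close> yields
  \<open>w \<in> x \<circ> z \<longleftrightarrow> z\<^sup>\<not> \<in> x\<^sup>\<sim>\<^sup>\<not> \<circ> w\<^sup>\<not>\<close>. Applied twice, this shows that \<open>x\<close> and
  \<open>x\<^sup>\<sim>\<^sup>\<not>\<^sup>\<sim>\<^sup>\<not>\<close> have the same right translates, hence the same upper set (as
  \<open>x \<preccurlyeq> w\<close> iff \<open>w \<in> x \<circ> i\<close> for some unit \<open>i\<close>), so \<open>x\<^sup>\<sim>\<^sup>\<not>\<^sup>\<sim>\<^sup>\<not> = x\<close>. Applying
  \<open>\<not>\<close> and then \<open>-\<close> gives \<open>x\<^sup>\<sim>\<^sup>\<not> = x\<^sup>\<not>\<^sup>-\<close>.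
\<close>

lemma mem_setcirc_singleton_left: "y \<in> setcirc c {x} V \<longleftrightarrow> (\<exists>v\<in>V. y \<in> c x v)"
  unfolding setcirc_def by blast

lemma mem_setcirc_singleton_right: "y \<in> setcirc c U {x} \<longleftrightarrow> (\<exists>u\<in>U. y \<in> c u x)"
  unfolding setcirc_def by blast

locale dinfl_frame =
  fixes W I le c tld mn
  assumes dinfl: "DInFL_frame W I le c tld mn"
begin

lemma unit_subset: "I \<subseteq> W"
  using dinfl unfolding DInFL_frame_def by (elim conjE) assumption

lemma tld_closed: "x \<in> W \<Longrightarrow> tld x \<in> W"
  using dinfl unfolding DInFL_frame_def by metis

lemma mn_closed: "x \<in> W \<Longrightarrow> mn x \<in> W"
  using dinfl unfolding DInFL_frame_def by metis

lemma le_refl: "x \<in> W \<Longrightarrow> le x x"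
  using dinfl unfolding DInFL_frame_def by metis

lemma le_antisym: "\<lbrakk>x \<in> W; y \<in> W; le x y; le y x\<rbrakk> \<Longrightarrow> x = y"
  using dinfl unfolding DInFL_frame_def by metis

lemma le_iff_unit_right: "\<lbrakk>x \<in> W; y \<in> W\<rbrakk> \<Longrightarrow> le x y \<longleftrightarrow> (\<exists>i\<in>I. y \<in> c x i)"
  using dinfl unfolding DInFL_frame_def mem_setcirc_singleton_left by metis

lemma le_iff_unit_left: "\<lbrakk>x \<in> W; y \<in> W\<rbrakk> \<Longrightarrow> le x y \<longleftrightarrow> (\<exists>i\<in>I. y \<in> c i x)"
  using dinfl unfolding DInFL_frame_def mem_setcirc_singleton_right by metis

lemma tld_mem_circ_iff:
  "\<lbrakk>x \<in> W; y \<in> W; z \<in> W\<rbrakk> \<Longrightarrow> tld z \<in> c x y \<longleftrightarrow> mn y \<in> c z x"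
  using dinfl unfolding DInFL_frame_def by metis

lemma mn_tld_le: "x \<in> W \<Longrightarrow> le (mn (tld x)) x"
  using dinfl unfolding DInFL_frame_def by metis

lemma tld_mn_le: "x \<in> W \<Longrightarrow> le (tld (mn x)) x"
  using dinfl unfolding DInFL_frame_def by metis

lemma tld_mn [simp]:
  assumes "a \<in> W"
  shows "tld (mn a) = a"
proof -
  have ma: "mn a \<in> W"
    using assms by (rule mn_closed)
  obtain i where i: "i \<in> I" "mn a \<in> c (mn a) i"
    using le_iff_unit_right[OF ma ma] le_refl[OF ma] by blast
  then have "tld (mn a) \<in> c i a"
    using tld_mem_circ_iff[OF _ assms ma] unit_subset by blast
  with i have "le a (tld (mn a))"
    using le_iff_unit_left[OF assms tld_closed[OF ma]] by blast
  then show ?thesis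
    using le_antisym[OF tld_closed[OF ma] assms tld_mn_le[OF assms]] by blast
qed

lemma mn_tld [simp]:
  assumes "a \<in> W"
  shows "mn (tld a) = a"
proof -
  have ta: "tld a \<in> W"
    using assms by (rule tld_closed)
  obtain i where i: "i \<in> I" "tld a \<in> c i (tld a)"
    using le_iff_unit_left[OF ta ta] le_refl[OF ta] by blast
  then have "mn (tld a) \<in> c a i"
    using tld_mem_circ_iff[OF _ ta assms] unit_subset by blast
  with i have "le a (mn (tld a))"
    using le_iff_unit_right[OF assms mn_closed[OF ta]] by blast
  then show ?thesis
    using le_antisym[OF mn_closed[OF ta] assms mn_tld_le[OF assms]] by blast
qed

end

locale dqra_frame =
  fixes W I le c tld mn ng
  assumes dqra: "DqRA_frame W I le c tld mn ng"
begin

sublocale dinfl_frame W I le c tld mn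
proof
  show "DInFL_frame W I le c tld mn"
    using dqra unfolding DqRA_frame_def by (rule conjunct1)
qed

lemma ng_closed: "x \<in> W \<Longrightarrow> ng x \<in> W"
  using dqra unfolding DqRA_frame_def by metis

lemma ng_ng [simp]: "x \<in> W \<Longrightarrow> ng (ng x) = x"
  using dqra unfolding DqRA_frame_def by metis

lemma mn_mem_circ_iff:
  "\<lbrakk>x \<in> W; y \<in> W; z \<in> W\<rbrakk> \<Longrightarrow> mn z \<in> c x y \<longleftrightarrow> ng z \<in> c (ng (tld y)) (ng (tld x))"
  using dqra unfolding DqRA_frame_def by metis

lemma mem_circ_iff_ng_mem_circ:
  assumes "w \<in> W" "x \<in> W" "z \<in> W"
  shows "w \<in> c x z \<longleftrightarrow> ng z \<in> c (ng (tld x)) (ng w)"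
proof -
  have "w \<in> c x z \<longleftrightarrow> tld (mn w) \<in> c x z"
    using assms by simp
  also have "\<dots> \<longleftrightarrow> mn z \<in> c (mn w) x"
    using tld_mem_circ_iff[OF assms(2,3) mn_closed[OF assms(1)]] .
  also have "\<dots> \<longleftrightarrow> ng z \<in> c (ng (tld x)) (ng (tld (mn w)))"
    using mn_mem_circ_iff[OF mn_closed[OF assms(1)] assms(2,3)] .
  also have "\<dots> \<longleftrightarrow> ng z \<in> c (ng (tld x)) (ng w)"
    using assms by simp
  finally show ?thesis .
qed

lemma ng_tld_closed: "x \<in> W \<Longrightarrow> ng (tld x) \<in> W"
  using ng_closed tld_closed by blast

lemma mem_circ_iff_ng_tld_twice:
  assumes "w \<in> W" "x \<in> W" "z \<in> W"
  shows "w \<in> c x z \<longleftrightarrow> w \<in> c (ng (tld (ng (tld x)))) z"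
proof -
  have "w \<in> c x z \<longleftrightarrow> ng z \<in> c (ng (tld x)) (ng w)"
    using assms by (rule mem_circ_iff_ng_mem_circ)
  also have "\<dots> \<longleftrightarrow> ng (ng w) \<in> c (ng (tld (ng (tld x)))) (ng (ng z))"
    using mem_circ_iff_ng_mem_circ
        [OF ng_closed[OF assms(3)] ng_tld_closed[OF assms(2)] ng_closed[OF assms(1)]] .
  also have "\<dots> \<longleftrightarrow> w \<in> c (ng (tld (ng (tld x)))) z"
    using assms by simp
  finally show ?thesis .
qed

lemma ng_tld_ng_tld [simp]:
  assumes "x \<in> W"
  shows "ng (tld (ng (tld x))) = x"
proof -
  let ?y = "ng (tld (ng (tld x)))"
  have y: "?y \<in> W"
    using assms ng_tld_closed by blast
  have "le x w \<longleftrightarrow> le ?y w" if "w \<in> W" for w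
    using le_iff_unit_right[of x w] le_iff_unit_right[of ?y w] mem_circ_iff_ng_tld_twice[of w x]
      that assms y unit_subset by blast
  then show ?thesis
    using le_antisym le_refl assms y by blast
qed

theorem ng_tld_eq_mn_ng:
  assumes "x \<in> W"
  shows "ng (tld x) = mn (ng x)"
proof -
  have "tld (ng (tld x)) = ng x"
    using ng_ng[OF tld_closed[OF ng_tld_closed[OF assms]]] assms by simp
  then have "mn (ng x) = mn (tld (ng (tld x)))"
    by simp
  also have "\<dots> = ng (tld x)"
    using ng_tld_closed[OF assms] by simp
  finally show ?thesis ..
qed

end

theorem mainTheorem8:
  assumes "DqRA_frame W I le c tld mn ng"
    and "x \<in> W"
  shows "ng (tld x) = mn (ng x)"
proof -
  interpret dqra_frame W I le c tld mn ng
    using assms(1) by unfold_locales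
  show ?thesis
    using assms(2) by (rule ng_tld_eq_mn_ng)
qed

end
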